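(* Let $T$ be a non-star tree containing a vertex $x$ with $d(x)\ge 3$. Suppose that for every neighbor $y$ of $x$, the tree $T_{(y,x)}$ is isomorphic to $P_1$ or to $P_2$, and that at most one of these trees is isomorphic to $P_1$. Then there exists a $(T,x)$-well 2-placement.
   Context: All graphs are finite, simple and undirected; $P_k$ is the path on $k$ vertices. A non-star tree is a tree not isomorphic to a star $K_{1,m}$ for any $m\ge0$. For an edge $ab$ of a tree $T$, $T_{(a,b)}$ denotes the connected component containing $a$ in $T-\{ab\}$. A permutation $\sigma$ of $V(T)$ is a 2-placement of $T$ if $\sigma(a)\sigma(b)\notin E(T)$ for every edge $ab\in E(T)$; $\sigma(T)\subseteq T^k$ means $dist_T(\sigma(a),\sigma(b))\le k$ for every edge $ab$ of $T$. A fixed-point-free permutation $\sigma$ of $V(T)$ is a $(T,x)$-well 2-placement if (distances and degrees in $T$): (1) $\sigma$ is a 2-placement of $T$; (2) $\sigma(T)\subseteq T^6$; (3) $dist(x,\sigma(x))\le 2$; (4) $dist(w,\sigma(w))\le 3$ for every neighbor $w$ of $x$; (5) $dist(w,\sigma(w))\le 4$ for every $w$ of degree $1$; (6) every cycle of $\sigma$ (in its disjoint cycle decomposition) has length at most $5$. *)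

theory Defs
  imports Main
begin

definition graph :: "'a set \<Rightarrow> ('a \<Rightarrow> 'a \<Rightarrow> bool) \<Rightarrow> bool" where
  "graph V E \<longleftrightarrow> finite V \<and> (\<forall>u v. E u v \<longrightarrow> u \<in> V \<and> v \<in> V \<and> u \<noteq> v \<and> E v u)"

definition connected_graph :: "'a set \<Rightarrow> ('a \<Rightarrow> 'a \<Rightarrow> bool) \<Rightarrow> bool" where
  "connected_graph V E \<longleftrightarrow> (\<forall>u\<in>V. \<forall>v\<in>V. E\<^sup>*\<^sup>* u v)"

definition acyclic_graph :: "('a \<Rightarrow> 'a \<Rightarrow> bool) \<Rightarrow> bool" where
  "acyclic_graph E \<longleftrightarrow> \<not> (\<exists>xs. length xs \<ge> 3 \<and> distinct xs \<and> successively E xs \<and> E (last xs) (hd xs))"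

definition tree :: "'a set \<Rightarrow> ('a \<Rightarrow> 'a \<Rightarrow> bool) \<Rightarrow> bool" where
  "tree V E \<longleftrightarrow> graph V E \<and> V \<noteq> {} \<and> connected_graph V E \<and> acyclic_graph E"

definition degree :: "'a set \<Rightarrow> ('a \<Rightarrow> 'a \<Rightarrow> bool) \<Rightarrow> 'a \<Rightarrow> nat" where
  "degree V E x = card {w \<in> V. E x w}"

definition dist :: "('a \<Rightarrow> 'a \<Rightarrow> bool) \<Rightarrow> 'a \<Rightarrow> 'a \<Rightarrow> nat" where
  "dist E u v = (LEAST n. (E ^^ n) u v)"

definition graph_iso :: "'a set \<Rightarrow> ('a \<Rightarrow> 'a \<Rightarrow> bool) \<Rightarrow> 'b set \<Rightarrow> ('b \<Rightarrow> 'b \<Rightarrow> bool) \<Rightarrow> bool" where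
  "graph_iso V1 E1 V2 E2 \<longleftrightarrow>
     (\<exists>f. bij_betw f V1 V2 \<and> (\<forall>u\<in>V1. \<forall>v\<in>V1. E1 u v \<longleftrightarrow> E2 (f u) (f v)))"

definition star_V :: "nat \<Rightarrow> nat set" where "star_V m = {0..m}"
definition star_E :: "nat \<Rightarrow> nat \<Rightarrow> nat \<Rightarrow> bool" where
  "star_E m i j \<longleftrightarrow> i \<le> m \<and> j \<le> m \<and> ((i = 0 \<and> j \<noteq> 0) \<or> (j = 0 \<and> i \<noteq> 0))"

definition path_V :: "nat \<Rightarrow> nat set" where "path_V k = {0..<k}"
definition path_E :: "nat \<Rightarrow> nat \<Rightarrow> nat \<Rightarrow> bool" where
  "path_E k i j \<longleftrightarrow> i < k \<and> j < k \<and> (i = j + 1 \<or> j = i + 1)"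

definition non_star_tree :: "'a set \<Rightarrow> ('a \<Rightarrow> 'a \<Rightarrow> bool) \<Rightarrow> bool" where
  "non_star_tree V E \<longleftrightarrow> tree V E \<and> \<not> (\<exists>m. graph_iso V E (star_V m) (star_E m))"

definition del_edge :: "('a \<Rightarrow> 'a \<Rightarrow> bool) \<Rightarrow> 'a \<Rightarrow> 'a \<Rightarrow> 'a \<Rightarrow> 'a \<Rightarrow> bool" where
  "del_edge E a b u v \<longleftrightarrow> E u v \<and> \<not> ((u = a \<and> v = b) \<or> (u = b \<and> v = a))"

text \<open>Vertex set of T_(a,b): component of a in T - {ab}.\<close>
definition branch_V :: "'a set \<Rightarrow> ('a \<Rightarrow> 'a \<Rightarrow> bool) \<Rightarrow> 'a \<Rightarrow> 'a \<Rightarrow> 'a set" where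
  "branch_V V E a b = {v \<in> V. (del_edge E a b)\<^sup>*\<^sup>* a v}"

definition branch_E :: "'a set \<Rightarrow> ('a \<Rightarrow> 'a \<Rightarrow> bool) \<Rightarrow> 'a \<Rightarrow> 'a \<Rightarrow> 'a \<Rightarrow> 'a \<Rightarrow> bool" where
  "branch_E V E a b u v \<longleftrightarrow> del_edge E a b u v \<and> u \<in> branch_V V E a b \<and> v \<in> branch_V V E a b"

definition two_placement :: "'a set \<Rightarrow> ('a \<Rightarrow> 'a \<Rightarrow> bool) \<Rightarrow> ('a \<Rightarrow> 'a) \<Rightarrow> bool" where
  "two_placement V E \<sigma> \<longleftrightarrow> bij_betw \<sigma> V V \<and> (\<forall>a b. E a b \<longrightarrow> \<not> E (\<sigma> a) (\<sigma> b))"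

text \<open>Every cycle of sigma has length at most 5: each vertex returns within 5 steps.\<close>
definition well_2_placement :: "'a set \<Rightarrow> ('a \<Rightarrow> 'a \<Rightarrow> bool) \<Rightarrow> 'a \<Rightarrow> ('a \<Rightarrow> 'a) \<Rightarrow> bool" where
  "well_2_placement V E x \<sigma> \<longleftrightarrow>
     bij_betw \<sigma> V V \<and> (\<forall>v\<in>V. \<sigma> v \<noteq> v) \<and>
     two_placement V E \<sigma> \<and>
     (\<forall>a b. E a b \<longrightarrow> dist E (\<sigma> a) (\<sigma> b) \<le> 6) \<and>
     dist E x (\<sigma> x) \<le> 2 \<and>
     (\<forall>w\<in>V. E x w \<longrightarrow> dist E w (\<sigma> w) \<le> 3) \<and>
     (\<forall>w\<in>V. degree V E w = 1 \<longrightarrow> dist E w (\<sigma> w) \<le> 4) \<and>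
     (\<forall>v\<in>V. \<exists>k\<in>{1..5}. (\<sigma> ^^ k) v = v)"

end

theory Submission
  imports Defs
begin

text \<open>The hypotheses force \<open>T\<close> to be a spider: the centre \<open>x\<close>, at most one pendant leaf \<open>l\<close>,
  and \<open>m \<ge> 2\<close> legs \<open>x - y\<^sub>i - z\<^sub>i\<close> of length two. Every vertex lies within distance 2 of \<open>x\<close>,
  so all distance conditions of a well 2-placement hold automatically; what has to be found is a
  fixed-point-free permutation with cycles of length at most 5 mapping no edge onto an edge.
  Legs are permuted in pairs \<open>(i, i + 1)\<close> by the 4-cycle \<open>(y\<^sub>i y\<^sub>i\<^sub>+\<^sub>1 z\<^sub>i\<^sub>+\<^sub>1 z\<^sub>i)\<close>; the centre,
  the leaf and the first two legs (three if \<open>m\<close> is odd) are covered by explicit short cycles.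
  The permutation is built on a combinatorial model of the spider and carried over to \<open>T\<close>
  along a graph isomorphism.\<close>

section \<open>Periodic maps and graph isomorphisms\<close>

lemma funpow_period_mult:
  fixes f :: "'a \<Rightarrow> 'a"
  assumes "(f ^^ k) a = a" shows "(f ^^ (k * n)) a = a"
  using assms by (induction n) (simp_all add: funpow_add)

lemma funpow_in:
  assumes "\<And>a. a \<in> A \<Longrightarrow> f a \<in> A" "a \<in> A" shows "(f ^^ n) a \<in> A"
  using assms by (induction n) auto

lemma periodic_bij_betw:
  assumes maps: "\<And>a. a \<in> A \<Longrightarrow> f a \<in> A"
    and periodic: "\<And>a. a \<in> A \<Longrightarrow> \<exists>k>0. (f ^^ k) a = a"
  shows "bij_betw f A A"
proof (rule bij_betw_imageI)
  show "inj_on f A"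
  proof (rule inj_onI)
    fix a b assume a: "a \<in> A" and b: "b \<in> A" and eq: "f a = f b"
    obtain k where k: "k > 0" "(f ^^ k) a = a" using periodic[OF a] by blast
    obtain l where l: "l > 0" "(f ^^ l) b = b" using periodic[OF b] by blast
    have "(f ^^ (k * l)) a = a" "(f ^^ (k * l)) b = b"
      using funpow_period_mult[where n=l, OF k(2)] funpow_period_mult[where n=k, OF l(2)]
      by (simp_all add: mult.commute)
    moreover obtain n where n: "k * l = Suc n" using k(1) l(1) not0_implies_Suc by fastforce
    have "(f ^^ n) (f c) = (f ^^ (k * l)) c" for c
      unfolding n funpow_Suc_right by simp
    ultimately show "a = b" using eq by metis
  qed
  show "f ` A = A"
  proof
    show "f ` A \<subseteq> A" using maps by blast
    show "A \<subseteq> f ` A"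
    proof
      fix a assume a: "a \<in> A"
      obtain k where k: "k > 0" "(f ^^ k) a = a" using periodic[OF a] by blast
      then obtain j where "k = Suc j" using gr0_implies_Suc by blast
      with k(2) have "a = f ((f ^^ j) a)" by simp
      moreover have "(f ^^ j) a \<in> A" using maps a by (rule funpow_in)
      ultimately show "a \<in> f ` A" by (rule image_eqI)
    qed
  qed
qed

lemma dist_le_walk: "(E ^^ n) u v \<Longrightarrow> dist E u v \<le> n"
  unfolding dist_def by (rule Least_le)

locale graph_isomorphism =
  fixes V1 :: "'a set" and E1 :: "'a \<Rightarrow> 'a \<Rightarrow> bool"
    and V2 :: "'b set" and E2 :: "'b \<Rightarrow> 'b \<Rightarrow> bool" and f :: "'a \<Rightarrow> 'b"
  assumes graph1: "graph V1 E1" and graph2: "graph V2 E2"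
    and bij: "bij_betw f V1 V2"
    and adj_iff: "\<And>u v. u \<in> V1 \<Longrightarrow> v \<in> V1 \<Longrightarrow> E2 (f u) (f v) \<longleftrightarrow> E1 u v"
begin

lemma edge1_in: "E1 u v \<Longrightarrow> u \<in> V1 \<and> v \<in> V1"
  using graph1 by (auto simp: graph_def)

lemma edge2_in: "E2 u v \<Longrightarrow> u \<in> V2 \<and> v \<in> V2"
  using graph2 by (auto simp: graph_def)

lemma maps: "v \<in> V1 \<Longrightarrow> f v \<in> V2"
  using bij by (auto simp: bij_betw_def)

lemma in_image: "w \<in> V2 \<Longrightarrow> \<exists>v\<in>V1. w = f v"
  using bij by (auto simp: bij_betw_def)

lemma relpowp_iff:
  assumes "u \<in> V1" "v \<in> V1"
  shows "(E2 ^^ n) (f u) (f v) \<longleftrightarrow> (E1 ^^ n) u v"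
  using assms(2)
proof (induction n arbitrary: v)
  case 0
  then show ?case using bij assms(1) by (auto simp: bij_betw_def inj_on_def)
next
  case (Suc n)
  show ?case
  proof
    assume "(E2 ^^ Suc n) (f u) (f v)"
    then obtain w where "(E2 ^^ n) (f u) w" "E2 w (f v)" by (rule relpowp_Suc_E)
    moreover obtain w' where "w' \<in> V1" "w = f w'" using in_image edge2_in \<open>E2 w (f v)\<close> by blast
    ultimately show "(E1 ^^ Suc n) u v" using Suc adj_iff by auto
  next
    assume "(E1 ^^ Suc n) u v"
    then obtain w where "(E1 ^^ n) u w" "E1 w v" by (rule relpowp_Suc_E)
    then have "(E2 ^^ n) (f u) (f w)" "E2 (f w) (f v)"
      using Suc adj_iff edge1_in by auto
    then show "(E2 ^^ Suc n) (f u) (f v)" by (rule relpowp_Suc_I)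
  qed
qed

lemma dist_eq: "u \<in> V1 \<Longrightarrow> v \<in> V1 \<Longrightarrow> dist E2 (f u) (f v) = dist E1 u v"
  by (simp add: dist_def relpowp_iff)

lemma degree_eq:
  assumes "u \<in> V1" shows "degree V2 E2 (f u) = degree V1 E1 u"
proof -
  have "{w \<in> V2. E2 (f u) w} = f ` {w \<in> V1. E1 u w}"
    using assms adj_iff in_image maps by fastforce
  moreover have "inj_on f {w \<in> V1. E1 u w}"
    using bij by (auto simp: bij_betw_def intro: inj_on_subset)
  ultimately show ?thesis by (simp add: degree_def card_image)
qed

definition transfer :: "('a \<Rightarrow> 'a) \<Rightarrow> 'b \<Rightarrow> 'b" where
  "transfer \<sigma> = f \<circ> \<sigma> \<circ> inv_into V1 f"

lemma transfer_apply: "v \<in> V1 \<Longrightarrow> transfer \<sigma> (f v) = f (\<sigma> v)"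
  using bij by (simp add: transfer_def bij_betw_def)

lemma transfer_bij:
  assumes "bij_betw \<sigma> V1 V1" shows "bij_betw (transfer \<sigma>) V2 V2"
  unfolding transfer_def
  by (rule bij_betw_trans[OF bij_betw_inv_into[OF bij] bij_betw_trans[OF assms bij]])

lemma transfer_funpow:
  assumes "bij_betw \<sigma> V1 V1" "v \<in> V1"
  shows "(transfer \<sigma> ^^ k) (f v) = f ((\<sigma> ^^ k) v)"
proof -
  have "\<And>v. v \<in> V1 \<Longrightarrow> \<sigma> v \<in> V1" using assms(1) by (auto simp: bij_betw_def)
  then show ?thesis by (induction k) (simp_all add: transfer_apply funpow_in assms(2))
qed

lemma inj_eq: "u \<in> V1 \<Longrightarrow> v \<in> V1 \<Longrightarrow> f u = f v \<longleftrightarrow> u = v"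
  using bij by (auto simp: bij_betw_def inj_on_def)

lemma ball_V2I: "(\<And>v. v \<in> V1 \<Longrightarrow> P (f v)) \<Longrightarrow> \<forall>w\<in>V2. P w"
  using in_image by blast

lemma all_edges2I: "(\<And>u v. E1 u v \<Longrightarrow> Q (f u) (f v)) \<Longrightarrow> \<forall>a b. E2 a b \<longrightarrow> Q a b"
  using in_image edge2_in adj_iff by metis

lemma well_2_placement_transfer:
  assumes w2p: "well_2_placement V1 E1 x \<sigma>" and x: "x \<in> V1"
  shows "well_2_placement V2 E2 (f x) (transfer \<sigma>)"
proof -
  have \<sigma>: "bij_betw \<sigma> V1 V1" using w2p by (simp add: well_2_placement_def)
  then have \<sigma>_in: "\<And>v. v \<in> V1 \<Longrightarrow> \<sigma> v \<in> V1" by (auto simp: bij_betw_def)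
  note facts = w2p[unfolded well_2_placement_def two_placement_def]
  note simps = transfer_apply dist_eq \<sigma>_in
  show ?thesis
    unfolding well_2_placement_def two_placement_def
  proof (intro conjI)
    show "\<forall>v\<in>V2. transfer \<sigma> v \<noteq> v"
      by (rule ball_V2I) (use facts in \<open>simp add: simps inj_eq\<close>)
    show "\<forall>a b. E2 a b \<longrightarrow> \<not> E2 (transfer \<sigma> a) (transfer \<sigma> b)"
    proof (rule all_edges2I)
      fix u v assume "E1 u v"
      with facts edge1_in[OF this] show "\<not> E2 (transfer \<sigma> (f u)) (transfer \<sigma> (f v))"
        by (simp add: simps adj_iff)
    qed
    show "\<forall>a b. E2 a b \<longrightarrow> dist E2 (transfer \<sigma> a) (transfer \<sigma> b) \<le> 6"
    proof (rule all_edges2I)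
      fix u v assume "E1 u v"
      with facts edge1_in[OF this] show "dist E2 (transfer \<sigma> (f u)) (transfer \<sigma> (f v)) \<le> 6"
        by (simp add: simps)
    qed
    show "dist E2 (f x) (transfer \<sigma> (f x)) \<le> 2"
      using facts x by (simp add: simps)
    show "\<forall>w\<in>V2. E2 (f x) w \<longrightarrow> dist E2 w (transfer \<sigma> w) \<le> 3"
      by (rule ball_V2I) (use facts x in \<open>auto simp: simps adj_iff\<close>)
    show "\<forall>w\<in>V2. degree V2 E2 w = 1 \<longrightarrow> dist E2 w (transfer \<sigma> w) \<le> 4"
      by (rule ball_V2I) (use facts in \<open>auto simp: simps degree_eq\<close>)
    show "\<forall>v\<in>V2. \<exists>k\<in>{1..5}. (transfer \<sigma> ^^ k) v = v"
    proof (rule ball_V2I)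
      fix v assume "v \<in> V1"
      then obtain k where "k \<in> {1..5}" "(\<sigma> ^^ k) v = v"
        using w2p unfolding well_2_placement_def by blast
      then show "\<exists>k\<in>{1..5}. (transfer \<sigma> ^^ k) (f v) = f v"
        using transfer_funpow[OF \<sigma> \<open>v \<in> V1\<close>] by (intro bexI[of _ k]) simp_all
    qed
  qed (use transfer_bij[OF \<sigma>] in blast)+
qed

end

section \<open>The spider model\<close>

datatype spider_vertex = Centre | Leaf | Inner nat | Outer nat

fun in_spider :: "bool \<Rightarrow> nat \<Rightarrow> spider_vertex \<Rightarrow> bool" where
  "in_spider leaf m Centre = True"
| "in_spider leaf m Leaf = leaf"
| "in_spider leaf m (Inner i) = (i < m)"
| "in_spider leaf m (Outer i) = (i < m)"

definition spider_V :: "bool \<Rightarrow> nat \<Rightarrow> spider_vertex set" where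
  "spider_V leaf m = {v. in_spider leaf m v}"

fun spider_adj :: "spider_vertex \<Rightarrow> spider_vertex \<Rightarrow> bool" where
  "spider_adj Centre Leaf = True"
| "spider_adj Leaf Centre = True"
| "spider_adj Centre (Inner i) = True"
| "spider_adj (Inner i) Centre = True"
| "spider_adj (Inner i) (Outer j) = (i = j)"
| "spider_adj (Outer j) (Inner i) = (i = j)"
| "spider_adj _ _ = False"

definition spider_E :: "bool \<Rightarrow> nat \<Rightarrow> spider_vertex \<Rightarrow> spider_vertex \<Rightarrow> bool" where
  "spider_E leaf m u v \<longleftrightarrow> in_spider leaf m u \<and> in_spider leaf m v \<and> spider_adj u v"

definition perm_of_cycles :: "'a list list \<Rightarrow> 'a \<Rightarrow> 'a" where
  "perm_of_cycles cs v =
     (case map_of (concat (map (\<lambda>c. zip c (rotate1 c)) cs)) v of Some w \<Rightarrow> w | None \<Rightarrow> v)"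

definition core_cycles :: "bool \<Rightarrow> bool \<Rightarrow> spider_vertex list list" where
  "core_cycles leaf odd_legs = (if \<not> odd_legs then
      (if \<not> leaf then [[Centre, Outer 0, Inner 0, Inner 1, Outer 1]]
       else [[Centre, Leaf, Outer 0], [Inner 0, Outer 1, Inner 1]])
    else
      (if \<not> leaf then [[Centre, Inner 0, Inner 1, Outer 1], [Inner 2, Outer 2, Outer 0]]
       else [[Centre, Leaf, Inner 0, Inner 1, Outer 1], [Inner 2, Outer 0, Outer 2]]))"

definition core_size :: "nat \<Rightarrow> nat" where
  "core_size m = (if even m then 2 else 3)"

text \<open>Outside the core, leg \<open>i\<close> with \<open>m + i\<close> even is paired with leg \<open>i + 1\<close>; since
  \<open>m - core_size m\<close> is even, this pairs up all remaining legs.\<close>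

fun spider_perm :: "bool \<Rightarrow> nat \<Rightarrow> spider_vertex \<Rightarrow> spider_vertex" where
  "spider_perm leaf m (Inner i) =
     (if i < core_size m then perm_of_cycles (core_cycles leaf (odd m)) (Inner i)
      else if even (m + i) then Inner (Suc i) else Outer i)"
| "spider_perm leaf m (Outer i) =
     (if i < core_size m then perm_of_cycles (core_cycles leaf (odd m)) (Outer i)
      else if even (m + i) then Inner i else Outer (i - 1))"
| "spider_perm leaf m v = perm_of_cycles (core_cycles leaf (odd m)) v"

lemma core_index_cases: "(i::nat) < core_size m \<Longrightarrow> i = 0 \<or> i = 1 \<or> (odd m \<and> i = 2)"
  by (auto simp: core_size_def split: if_splits)

lemma pair_leader_Suc_less: "(i::nat) < m \<Longrightarrow> even (m + i) \<Longrightarrow> Suc i < m"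
  by presburger

lemma pair_follower_gt: "core_size m \<le> i \<Longrightarrow> odd (m + i) \<Longrightarrow> core_size m < i"
  by (auto simp: core_size_def split: if_splits) presburger+

lemma two_le_core_size: "2 \<le> core_size m"
  by (simp add: core_size_def)

lemma odd_legs_ge_3: "2 \<le> m \<Longrightarrow> odd m \<Longrightarrow> 3 \<le> (m::nat)"
  by presburger

lemma pair_cases:
  assumes "core_size m \<le> i"
  obtains (leader) "even (m + i)" | (follower) j where "i = Suc j" "core_size m \<le> j" "even (m + j)"
proof (cases "even (m + i)")
  case False
  with assms have "core_size m < i" by (rule pair_follower_gt)
  then obtain j where "i = Suc j" "core_size m \<le> j" by (metis Suc_le_eq less_imp_Suc_add le_add1 add_Suc)
  then show ?thesis using False follower by simp
qed (rule leader)

lemma pair_cycle: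
  assumes "core_size m \<le> i" "even (m + i)"
  shows "spider_perm leaf m (Inner i) = Inner (Suc i)" "spider_perm leaf m (Inner (Suc i)) = Outer (Suc i)"
    "spider_perm leaf m (Outer (Suc i)) = Outer i" "spider_perm leaf m (Outer i) = Inner i"
  using assms by simp_all

abbreviation core_vertices :: "bool \<Rightarrow> nat \<Rightarrow> spider_vertex list" where
  "core_vertices leaf m \<equiv> concat (core_cycles leaf (odd m))"

lemma core_vertex_in_core_vertices:
  assumes "v \<in> {Inner i, Outer i}" "i < core_size m"
  shows "v \<in> set (core_vertices leaf m)"
  using core_index_cases[OF assms(2)] assms(1) by (auto simp: core_cycles_def)

lemma spider_vertex_cases:
  assumes "in_spider leaf m v"
  obtains (core) "v \<in> set (core_vertices leaf m)"
  | (pair) i where "v \<in> {Inner i, Inner (Suc i), Outer (Suc i), Outer i}"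
      "core_size m \<le> i" "even (m + i)" "Suc i < m"
proof -
  have pair_block: ?thesis if v: "v \<in> {Inner k, Outer k}" "k < m" "core_size m \<le> k" for k
    using \<open>core_size m \<le> k\<close>
  proof (cases rule: pair_cases)
    case leader
    with pair_leader_Suc_less[OF v(2)] show ?thesis using pair v by auto
  next
    case (follower j)
    then show ?thesis using pair v by auto
  qed
  show ?thesis
  proof (cases v)
    case (Inner k)
    then show ?thesis using assms pair_block[of k] core_vertex_in_core_vertices[of v k m leaf] core
      by (cases "k < core_size m") auto
  next
    case (Outer k)
    then show ?thesis using assms pair_block[of k] core_vertex_in_core_vertices[of v k m leaf] core
      by (cases "k < core_size m") auto
  qed (use assms core in \<open>auto simp: core_cycles_def\<close>)
qed

lemma core_perm_in:
  assumes "2 \<le> m" "v \<in> set (core_vertices leaf m)"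
  shows "in_spider leaf m (spider_perm leaf m v)"
  using assms odd_legs_ge_3[OF assms(1)]
  by (cases leaf; cases "odd m") (auto simp: core_cycles_def perm_of_cycles_def core_size_def)

lemma core_perm_no_fixpoint:
  assumes "v \<in> set (core_vertices leaf m)"
  shows "spider_perm leaf m v \<noteq> v"
  using assms
  by (cases leaf; cases "odd m") (auto simp: core_cycles_def perm_of_cycles_def core_size_def)

lemma core_perm_period:
  assumes "v \<in> set (core_vertices leaf m)"
  shows "(spider_perm leaf m ^^ 3) v = v \<or> (spider_perm leaf m ^^ 4) v = v \<or> (spider_perm leaf m ^^ 5) v = v"
  using assms
  by (cases leaf; cases "odd m") (auto simp: core_cycles_def perm_of_cycles_def core_size_def eval_nat_numeral)

lemma core_perm_nonadjacent:
  assumes "u \<in> set (core_vertices leaf m)" "v \<in> set (core_vertices leaf m)" "spider_adj u v"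
  shows "\<not> spider_adj (spider_perm leaf m u) (spider_perm leaf m v)"
  using assms
  by (cases leaf; cases "odd m") (auto simp: core_cycles_def perm_of_cycles_def core_size_def)

lemma pair_block_nonadjacent:
  assumes "core_size m \<le> i" "even (m + i)" "v \<in> {Inner i, Inner (Suc i), Outer (Suc i), Outer i}" "spider_adj u v"
  shows "\<not> spider_adj (spider_perm leaf m u) (spider_perm leaf m v)"
proof -
  have "u = Centre \<or> u \<in> {Inner i, Inner (Suc i), Outer (Suc i), Outer i}"
    using assms(3,4) by (cases u) auto
  moreover have "spider_perm leaf m Centre \<in> {Leaf, Outer 0, Inner 0}"
    by (auto simp: perm_of_cycles_def core_cycles_def)
  moreover have "0 < i" using assms(1) two_le_core_size[of m] by simp
  ultimately show ?thesis using assms pair_cycle[OF assms(1,2), of leaf] by auto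
qed

lemma spider_adj_sym: "spider_adj u v \<longleftrightarrow> spider_adj v u"
  by (cases u; cases v) auto

lemma pair_perm_period:
  assumes "core_size m \<le> i" "even (m + i)" "v \<in> {Inner i, Inner (Suc i), Outer (Suc i), Outer i}"
  shows "(spider_perm leaf m ^^ 4) v = v"
  using assms pair_cycle[OF assms(1,2), of leaf] by (auto simp: eval_nat_numeral)

lemma spider_perm_in:
  assumes "2 \<le> m" "in_spider leaf m v" shows "in_spider leaf m (spider_perm leaf m v)"
  using assms(2)
proof (cases rule: spider_vertex_cases)
  case core
  then show ?thesis using core_perm_in[OF assms(1)] by blast
next
  case (pair i)
  then show ?thesis using pair_cycle[OF pair(2,3), of leaf] by auto
qed

lemma spider_perm_no_fixpoint:
  assumes "in_spider leaf m v" shows "spider_perm leaf m v \<noteq> v"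
  using assms
proof (cases rule: spider_vertex_cases)
  case core
  then show ?thesis by (rule core_perm_no_fixpoint)
next
  case (pair i)
  then show ?thesis using pair_cycle[OF pair(2,3), of leaf] by auto
qed

lemma spider_perm_period:
  assumes "in_spider leaf m v" shows "\<exists>k\<in>{1..5}. (spider_perm leaf m ^^ k) v = v"
  using assms
proof (cases rule: spider_vertex_cases)
  case core
  then show ?thesis using core_perm_period by force
next
  case (pair i)
  then show ?thesis using pair_perm_period[OF pair(2,3,1)] by force
qed

lemma spider_perm_nonadjacent:
  assumes "in_spider leaf m u" "in_spider leaf m v" "spider_adj u v"
  shows "\<not> spider_adj (spider_perm leaf m u) (spider_perm leaf m v)"
  using assms(1)
proof (cases rule: spider_vertex_cases)
  case u_core: core
  from assms(2) show ?thesis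
  proof (cases rule: spider_vertex_cases)
    case core
    then show ?thesis using core_perm_nonadjacent u_core assms(3) by blast
  next
    case (pair i)
    then show ?thesis using pair_block_nonadjacent assms(3) by blast
  qed
next
  case (pair i)
  then show ?thesis using pair_block_nonadjacent[OF pair(2,3,1)] assms(3) spider_adj_sym by blast
qed

lemma graph_spider: "graph (spider_V leaf m) (spider_E leaf m)"
proof -
  have "spider_V leaf m \<subseteq> {Centre, Leaf} \<union> Inner ` {..<m} \<union> Outer ` {..<m}"
    by (auto simp: spider_V_def elim: in_spider.elims)
  then have "finite (spider_V leaf m)" by (rule finite_subset) simp
  moreover have "spider_adj u v \<Longrightarrow> u \<noteq> v" for u v by (cases u; cases v) auto
  ultimately show ?thesis
    by (auto simp: graph_def spider_E_def spider_V_def spider_adj_sym)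
qed

fun spider_depth :: "spider_vertex \<Rightarrow> nat" where
  "spider_depth Centre = 0"
| "spider_depth Leaf = 1"
| "spider_depth (Inner i) = 1"
| "spider_depth (Outer i) = 2"

lemma spider_walks_to_Centre:
  assumes "in_spider leaf m v"
  shows "(spider_E leaf m ^^ spider_depth v) Centre v \<and> (spider_E leaf m ^^ spider_depth v) v Centre"
proof (cases v)
  case (Outer i)
  then have "spider_E leaf m Centre (Inner i)" "spider_E leaf m (Inner i) (Outer i)"
    "spider_E leaf m (Outer i) (Inner i)" "spider_E leaf m (Inner i) Centre"
    using assms by (auto simp: spider_E_def)
  then show ?thesis unfolding Outer spider_depth.simps numeral_2_eq_2
    by (meson relpowp_Suc_I2 relpowp_0_I)
qed (use assms in \<open>auto simp: spider_E_def\<close>)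

lemma dist_spider:
  assumes "in_spider leaf m u" "in_spider leaf m v"
  shows "dist (spider_E leaf m) u v \<le> spider_depth u + spider_depth v"
  using spider_walks_to_Centre[OF assms(1)] spider_walks_to_Centre[OF assms(2)]
  by (blast intro: dist_le_walk relpowp_trans)

lemma depth_le_2: "spider_depth v \<le> 2"
  by (cases v) auto

lemma spider_perm_bij:
  assumes "2 \<le> m"
  shows "bij_betw (spider_perm leaf m) (spider_V leaf m) (spider_V leaf m)"
proof (rule periodic_bij_betw)
  fix v assume "v \<in> spider_V leaf m"
  then show "spider_perm leaf m v \<in> spider_V leaf m"
    using spider_perm_in[OF assms] by (simp add: spider_V_def)
  from \<open>v \<in> spider_V leaf m\<close> obtain k where "k \<in> {1..5}" "(spider_perm leaf m ^^ k) v = v"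
    using spider_perm_period[of leaf m v] unfolding spider_V_def by blast
  then show "\<exists>k>0. (spider_perm leaf m ^^ k) v = v" by (intro exI[of _ k]) simp
qed

lemma spider_well_2_placement:
  assumes "2 \<le> m"
  shows "well_2_placement (spider_V leaf m) (spider_E leaf m) Centre (spider_perm leaf m)"
proof -
  let ?V = "spider_V leaf m" and ?E = "spider_E leaf m" and ?\<sigma> = "spider_perm leaf m"
  have dist_\<sigma>: "dist ?E (?\<sigma> u) (?\<sigma> v) \<le> spider_depth (?\<sigma> u) + spider_depth (?\<sigma> v)"
    if "in_spider leaf m u" "in_spider leaf m v" for u v
    by (rule dist_spider[OF spider_perm_in[OF assms that(1)] spider_perm_in[OF assms that(2)]])
  have dist_moved: "dist ?E v (?\<sigma> v) \<le> spider_depth v + 2" if "in_spider leaf m v" for v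
    using dist_spider[OF that spider_perm_in[OF assms that]] depth_le_2[of "?\<sigma> v"] by linarith
  show ?thesis
    unfolding well_2_placement_def two_placement_def
  proof (intro conjI ballI allI impI)
    show "\<not> ?E (?\<sigma> a) (?\<sigma> b)" if "?E a b" for a b
      using that spider_perm_nonadjacent by (auto simp: spider_E_def)
    show "dist ?E (?\<sigma> a) (?\<sigma> b) \<le> 6" if "?E a b" for a b
    proof -
      have "in_spider leaf m a" "in_spider leaf m b" using that by (simp_all add: spider_E_def)
      then show ?thesis using dist_\<sigma> depth_le_2[of "?\<sigma> a"] depth_le_2[of "?\<sigma> b"]
        by fastforce
    qed
    show "dist ?E Centre (?\<sigma> Centre) \<le> 2"
      using dist_moved[of Centre] by simp
    show "dist ?E w (?\<sigma> w) \<le> 3" if "w \<in> ?V" "?E Centre w" for w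
    proof -
      have "spider_depth w = 1" using that(2) by (cases w) (simp_all add: spider_E_def)
      then show ?thesis using that(1) dist_moved[of w] by (simp add: spider_V_def)
    qed
    show "dist ?E w (?\<sigma> w) \<le> 4" if "w \<in> ?V" for w
      using that dist_moved[of w] depth_le_2[of w] by (simp add: spider_V_def)
    show "?\<sigma> v \<noteq> v" if "v \<in> ?V" for v
      using that spider_perm_no_fixpoint by (simp add: spider_V_def)
    show "\<exists>k\<in>{1..5}. (?\<sigma> ^^ k) v = v" if "v \<in> ?V" for v
      using that spider_perm_period by (simp add: spider_V_def)
  qed (fact spider_perm_bij[OF assms])+
qed

section \<open>Recognising the spider\<close>

lemma branch_step:
  assumes "graph V E" "u \<in> branch_V V E y x" "E u w" "\<not> ((u = y \<and> w = x) \<or> (u = x \<and> w = y))"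
  shows "w \<in> branch_V V E y x"
  using assms unfolding branch_V_def graph_def
  by (auto intro: rtranclp.rtrancl_into_rtrancl simp: del_edge_def)

lemma root_in_branch: "y \<in> V \<Longrightarrow> y \<in> branch_V V E y x"
  by (simp add: branch_V_def)

lemma card_branch:
  assumes "graph_iso (branch_V V E y x) (branch_E V E y x) (path_V k) (path_E k)"
  shows "card (branch_V V E y x) = k"
  using assms bij_betw_same_card by (fastforce simp: graph_iso_def path_V_def)

lemma P1_branch_neighbours:
  assumes "graph V E" "E x y"
    and "graph_iso (branch_V V E y x) (branch_E V E y x) (path_V 1) (path_E 1)"
  shows "E y w \<longleftrightarrow> w = x"
proof
  have y: "y \<in> V" "x \<noteq> y" "E y x" using assms(1,2) by (auto simp: graph_def)
  then have "branch_V V E y x = {y}"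
    using card_branch[OF assms(3)] root_in_branch[of y V E x] by (auto simp: card_1_singleton_iff)
  moreover assume "E y w"
  ultimately show "w = x"
    using branch_step[OF assms(1) root_in_branch[OF y(1)], where x=x and w=w] assms(1) by (auto simp: graph_def)
qed (use assms(1,2) in \<open>auto simp: graph_def\<close>)

lemma P2_branch_neighbours:
  assumes "graph V E" "E x y"
    and "graph_iso (branch_V V E y x) (branch_E V E y x) (path_V 2) (path_E 2)"
  shows "\<exists>z. (\<forall>w. E y w \<longleftrightarrow> w = x \<or> w = z) \<and> (\<forall>w. E z w \<longleftrightarrow> w = y)"
proof -
  let ?B = "branch_V V E y x"
  have irrefl: "\<And>u. \<not> E u u" and sym: "\<And>u v. E u v \<Longrightarrow> E v u"
    using assms(1) by (auto simp: graph_def)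
  have "y \<in> V" using assms(1,2) by (auto simp: graph_def)
  then have y: "y \<in> ?B" by (rule root_in_branch)
  have "card (?B - {y}) = 1" using card_branch[OF assms(3)] y by simp
  then obtain z where "?B - {y} = {z}" by (auto simp: card_1_singleton_iff)
  then have B: "?B = {y, z}" "z \<noteq> y" using y by auto
  obtain f where f: "bij_betw f ?B (path_V 2)"
    and f_adj: "\<forall>u\<in>?B. \<forall>v\<in>?B. branch_E V E y x u v \<longleftrightarrow> path_E 2 (f u) (f v)"
    using assms(3) unfolding graph_iso_def by blast
  have "0 \<in> f ` ?B" "1 \<in> f ` ?B" using f by (auto simp: bij_betw_def path_V_def)
  then obtain a b where a: "a \<in> ?B" "f a = 0" and b: "b \<in> ?B" "f b = 1"
    by (metis imageE)
  have "branch_E V E y x a b \<longleftrightarrow> path_E 2 (f a) (f b)" using f_adj a(1) b(1) by blast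
  then have "branch_E V E y x a b" using a(2) b(2) by (simp add: path_E_def)
  then have ab: "E a b" "a \<noteq> b" "\<not> ((a = y \<and> b = x) \<or> (a = x \<and> b = y))"
    using irrefl by (auto simp: branch_E_def del_edge_def)
  moreover have "(a = y \<and> b = z) \<or> (a = z \<and> b = y)" using a(1) b(1) B ab(2) by auto
  ultimately have yz: "E y z" "z \<noteq> x" using sym[OF ab(1)] by auto
  have "E y w \<longleftrightarrow> w = x \<or> w = z" for w
    using branch_step[OF assms(1) y, where w=w] B irrefl assms(2) yz(1) sym[OF assms(2)] by auto
  moreover have "E z w \<longleftrightarrow> w = y" for w
    using branch_step[OF assms(1), where u=z and y=y and x=x and w=w] B irrefl yz sym[OF yz(1)] by auto
  ultimately show ?thesis by blast
qed

lemma P2_branches_outer_vertices: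
  assumes "graph V E"
    and "\<And>y. y \<in> N \<Longrightarrow> E x y \<and> graph_iso (branch_V V E y x) (branch_E V E y x) (path_V 2) (path_E 2)"
  shows "\<exists>z. \<forall>y\<in>N. (\<forall>w. E y w \<longleftrightarrow> w = x \<or> w = z y) \<and> (\<forall>w. E (z y) w \<longleftrightarrow> w = y)"
proof (rule bchoice, rule ballI)
  fix y assume "y \<in> N"
  with assms(2) have "E x y" "graph_iso (branch_V V E y x) (branch_E V E y x) (path_V 2) (path_E 2)"
    by blast+
  then show "\<exists>z. (\<forall>w. E y w \<longleftrightarrow> w = x \<or> w = z) \<and> (\<forall>w. E z w \<longleftrightarrow> w = y)"
    by (rule P2_branch_neighbours[OF assms(1)])
qed

lemma card_le_1_subset_singleton:
  assumes "finite A" "card A \<le> 1" shows "\<exists>a. A \<subseteq> {a}"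
proof (cases "A = {}")
  case False
  then obtain a where "a \<in> A" by blast
  then have "A \<subseteq> {a}" using assms card_le_Suc0_iff_eq[OF assms(1)] by auto
  then show ?thesis ..
qed simp

fun spider_embedding :: "'a \<Rightarrow> 'a \<Rightarrow> (nat \<Rightarrow> 'a) \<Rightarrow> (nat \<Rightarrow> 'a) \<Rightarrow> spider_vertex \<Rightarrow> 'a" where
  "spider_embedding x l y z Centre = x"
| "spider_embedding x l y z Leaf = l"
| "spider_embedding x l y z (Inner i) = y i"
| "spider_embedding x l y z (Outer i) = z i"

locale spider =
  fixes V :: "'a set" and E :: "'a \<Rightarrow> 'a \<Rightarrow> bool" and x :: 'a
    and leaf :: bool and l :: 'a and m :: nat and y z :: "nat \<Rightarrow> 'a"
  assumes graph: "graph V E" and connected: "connected_graph V E" and centre: "x \<in> V"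
    and two_legs: "2 \<le> m" and inner_inj: "inj_on y {..<m}"
    and centre_nbrs: "E x w \<longleftrightarrow> (leaf \<and> w = l) \<or> (\<exists>i<m. w = y i)"
    and leaf_nbrs: "leaf \<Longrightarrow> E l w \<longleftrightarrow> w = x"
    and inner_nbrs: "i < m \<Longrightarrow> E (y i) w \<longleftrightarrow> w = x \<or> w = z i"
    and outer_nbrs: "i < m \<Longrightarrow> E (z i) w \<longleftrightarrow> w = y i"
begin

abbreviation emb :: "spider_vertex \<Rightarrow> 'a" where
  "emb \<equiv> spider_embedding x l y z"

lemma irrefl: "\<not> E v v"
  using graph by (auto simp: graph_def)

lemma edge_in: "E u v \<Longrightarrow> u \<in> V \<and> v \<in> V"
  using graph by (auto simp: graph_def)

lemma outer_ne_centre: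
  assumes "i < m" shows "z i \<noteq> x"
proof
  assume "z i = x"
  obtain j where "j < m" "j \<noteq> i"
    using two_legs by (intro that[of "if i = 0 then 1 else 0"]) auto
  then have "E x (y j)" "y j \<noteq> y i"
    using centre_nbrs assms inner_inj by (auto simp: inj_on_def)
  then show False using outer_nbrs[OF assms] \<open>z i = x\<close> by simp
qed

lemma embedding_neighbours:
  assumes "in_spider leaf m c" "E (emb c) w"
  shows "\<exists>d. in_spider leaf m d \<and> spider_adj c d \<and> w = emb d"
proof (cases c)
  case Centre
  then show ?thesis using assms centre_nbrs
    by (auto intro: exI[of _ Leaf] exI[of _ "Inner i" for i])
next
  case Leaf
  then show ?thesis using assms leaf_nbrs by (auto intro: exI[of _ Centre])
next
  case (Inner i)
  then show ?thesis using assms inner_nbrs[of i w]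
    by (auto intro: exI[of _ Centre] exI[of _ "Outer i"])
next
  case (Outer i)
  then show ?thesis using assms outer_nbrs[of i w] by (auto intro: exI[of _ "Inner i"])
qed

lemma centre_ne_leaf: "leaf \<Longrightarrow> x \<noteq> l"
  using centre_nbrs[of l] irrefl by metis

lemma leg_distinct:
  assumes "i < m"
  shows "x \<noteq> y i" "x \<noteq> z i" "leaf \<Longrightarrow> l \<noteq> y i" "leaf \<Longrightarrow> l \<noteq> z i"
proof -
  have xy: "E x (y i)" using centre_nbrs assms by blast
  show "x \<noteq> y i" using xy irrefl by metis
  show zx: "x \<noteq> z i" using outer_ne_centre[OF assms] by simp
  show "leaf \<Longrightarrow> l \<noteq> y i" using leaf_nbrs[of "z i"] inner_nbrs[OF assms, of "z i"] zx by auto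
  show "leaf \<Longrightarrow> l \<noteq> z i" using leaf_nbrs[of "y i"] outer_nbrs[OF assms, of "y i"] xy irrefl by metis
qed

lemma legs_distinct:
  assumes "i < m" "j < m"
  shows "y i \<noteq> z j" "y i = y j \<Longrightarrow> i = j" "z i = z j \<Longrightarrow> i = j"
proof -
  show "y i \<noteq> z j"
    using inner_nbrs[OF assms(1), of x] outer_nbrs[OF assms(2), of x] leg_distinct(1)[OF assms(2)] by auto
  show "y i = y j \<Longrightarrow> i = j" using inner_inj assms by (auto simp: inj_on_def)
  show "z i = z j \<Longrightarrow> i = j"
    using outer_nbrs[OF assms(1), of "y i"] outer_nbrs[OF assms(2), of "y i"] inner_inj assms
    by (auto simp: inj_on_def)
qed

lemma embedding_inj: "inj_on emb (spider_V leaf m)"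
proof (rule inj_onI)
  fix c d assume "c \<in> spider_V leaf m" "d \<in> spider_V leaf m" "emb c = emb d"
  then show "c = d"
    using centre_ne_leaf leg_distinct legs_distinct
    by (cases c; cases d) (auto simp: spider_V_def dest: sym)
qed

lemma embedding_adj_iff:
  assumes "in_spider leaf m c" "in_spider leaf m d"
  shows "E (emb c) (emb d) \<longleftrightarrow> spider_adj c d"
proof
  assume "E (emb c) (emb d)"
  then obtain d' where "in_spider leaf m d'" "spider_adj c d'" "emb d = emb d'"
    using embedding_neighbours[OF assms(1)] by blast
  then show "spider_adj c d"
    using embedding_inj assms by (auto simp: spider_V_def inj_on_def)
next
  assume "spider_adj c d"
  then show "E (emb c) (emb d)"
    using assms centre_nbrs leaf_nbrs inner_nbrs outer_nbrs
    by (cases c; cases d) auto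
qed

lemma embedding_image: "emb ` spider_V leaf m = V"
proof
  show "emb ` spider_V leaf m \<subseteq> V"
  proof
    fix v assume "v \<in> emb ` spider_V leaf m"
    then obtain c where "in_spider leaf m c" "v = emb c" by (auto simp: spider_V_def)
    moreover have "y i \<in> V \<and> z i \<in> V" if "i < m" for i
      using edge_in[of "y i" "z i"] inner_nbrs[OF that, of "z i"] by simp
    moreover have "leaf \<Longrightarrow> l \<in> V" using edge_in[of x l] centre_nbrs[of l] by simp
    ultimately show "v \<in> V" using centre by (cases c) auto
  qed
  show "V \<subseteq> emb ` spider_V leaf m"
  proof
    fix v assume "v \<in> V"
    then have "E\<^sup>*\<^sup>* x v" using connected centre by (simp add: connected_graph_def)
    then show "v \<in> emb ` spider_V leaf m"
    proof (induction rule: rtranclp_induct)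
      case base
      show ?case by (rule image_eqI[of _ _ Centre]) (simp_all add: spider_V_def)
    next
      case (step u w)
      then obtain c where "in_spider leaf m c" "u = emb c" by (auto simp: spider_V_def)
      then show ?case using embedding_neighbours step(2) by (fastforce simp: spider_V_def)
    qed
  qed
qed

lemma embedding_isomorphism: "graph_isomorphism (spider_V leaf m) (spider_E leaf m) V E emb"
proof
  show "bij_betw emb (spider_V leaf m) V"
    using embedding_inj embedding_image by (simp add: bij_betw_def)
  show "E (emb c) (emb d) \<longleftrightarrow> spider_E leaf m c d"
    if "c \<in> spider_V leaf m" "d \<in> spider_V leaf m" for c d
    using that embedding_adj_iff by (simp add: spider_E_def spider_V_def)
qed (fact graph_spider graph)+

end

lemma spider_from_short_branches:
  assumes "tree V E" "x \<in> V" "degree V E x \<ge> 3"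
    and branches: "\<forall>y\<in>V. E x y \<longrightarrow>
           graph_iso (branch_V V E y x) (branch_E V E y x) (path_V 1) (path_E 1) \<or>
           graph_iso (branch_V V E y x) (branch_E V E y x) (path_V 2) (path_E 2)"
    and "card {y \<in> V. E x y \<and>
           graph_iso (branch_V V E y x) (branch_E V E y x) (path_V 1) (path_E 1)} \<le> 1"
  obtains leaf l m h z where "spider V E x leaf l m h z"
proof -
  have graph: "graph V E" and connected: "connected_graph V E"
    using assms(1) by (simp_all add: tree_def)
  have fin: "finite V" and edge_in: "\<And>u v. E u v \<Longrightarrow> u \<in> V \<and> v \<in> V"
    using graph by (auto simp: graph_def)
  define N1 where "N1 = {y \<in> V. E x y \<and>
           graph_iso (branch_V V E y x) (branch_E V E y x) (path_V 1) (path_E 1)}"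
  define N2 where "N2 = {y \<in> V. E x y} - N1"
  have "card N1 \<le> 1" "finite N1" using assms(5) fin by (simp_all add: N1_def)
  then obtain l where N1_l: "N1 \<subseteq> {l}" by (metis card_le_1_subset_singleton)
  define leaf where "leaf = (l \<in> N1)"
  define m where "m = card N2"
  have "card {y \<in> V. E x y} \<ge> 3" using assms(3) by (simp add: degree_def)
  moreover have "N1 \<subseteq> {y \<in> V. E x y}" by (auto simp: N1_def)
  ultimately have "2 \<le> m"
    using card_Diff_subset[of N1 "{y \<in> V. E x y}"] \<open>card N1 \<le> 1\<close> fin
    by (simp add: m_def N2_def finite_subset)
  obtain h where h: "bij_betw h {..<m} N2"
    using ex_bij_betw_nat_finite[of N2] fin by (auto simp: m_def N2_def lessThan_atLeast0)
  have "E x y \<and> graph_iso (branch_V V E y x) (branch_E V E y x) (path_V 2) (path_E 2)"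
    if "y \<in> N2" for y
    using that branches by (auto simp: N2_def N1_def)
  from P2_branches_outer_vertices[OF graph this] obtain zf
    where "\<forall>y\<in>N2. (\<forall>w. E y w \<longleftrightarrow> w = x \<or> w = zf y) \<and> (\<forall>w. E (zf y) w \<longleftrightarrow> w = y)"
    by blast
  then have zf: "\<And>y w. y \<in> N2 \<Longrightarrow> E y w \<longleftrightarrow> w = x \<or> w = zf y"
    "\<And>y w. y \<in> N2 \<Longrightarrow> E (zf y) w \<longleftrightarrow> w = y"
    by blast+
  have h_N2: "\<And>i. i < m \<Longrightarrow> h i \<in> N2" using h by (auto simp: bij_betw_def)
  have "spider V E x leaf l m h (zf \<circ> h)"
  proof
    show "E x w \<longleftrightarrow> leaf \<and> w = l \<or> (\<exists>i<m. w = h i)" for w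
    proof -
      have "E x w \<longleftrightarrow> w \<in> N1 \<or> w \<in> N2" using edge_in by (auto simp: N1_def N2_def)
      moreover have "w \<in> N1 \<longleftrightarrow> leaf \<and> w = l" using N1_l by (auto simp: leaf_def)
      moreover have "w \<in> N2 \<longleftrightarrow> (\<exists>i<m. w = h i)" using h by (auto simp: bij_betw_def)
      ultimately show ?thesis by blast
    qed
    show "E l w \<longleftrightarrow> w = x" if leaf for w
      using that P1_branch_neighbours[OF graph] by (auto simp: leaf_def N1_def)
    show "E (h i) w \<longleftrightarrow> w = x \<or> w = (zf \<circ> h) i" if "i < m" for i w
      using zf(1) h_N2[OF that] by simp
    show "E ((zf \<circ> h) i) w \<longleftrightarrow> w = h i" if "i < m" for i w
      using zf(2) h_N2[OF that] by simp
    show "inj_on h {..<m}" using h by (simp add: bij_betw_def)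
  qed (fact graph connected \<open>x \<in> V\<close> \<open>2 \<le> m\<close>)+
  then show ?thesis by (rule that)
qed

theorem lemma3p9:
  fixes V :: "'a set" and E :: "'a \<Rightarrow> 'a \<Rightarrow> bool" and x :: 'a
  assumes "non_star_tree V E"
    and "x \<in> V"
    and "degree V E x \<ge> 3"
    and "\<forall>y\<in>V. E x y \<longrightarrow>
           graph_iso (branch_V V E y x) (branch_E V E y x) (path_V 1) (path_E 1) \<or>
           graph_iso (branch_V V E y x) (branch_E V E y x) (path_V 2) (path_E 2)"
    and "card {y \<in> V. E x y \<and>
           graph_iso (branch_V V E y x) (branch_E V E y x) (path_V 1) (path_E 1)} \<le> 1"
  shows "\<exists>\<sigma>. well_2_placement V E x \<sigma>"
proof -
  have tree: "tree V E" using assms(1) by (simp add: non_star_tree_def)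
  obtain leaf l m h z where "spider V E x leaf l m h z"
    using spider_from_short_branches[OF tree assms(2-5)] .
  then interpret spider V E x leaf l m h z .
  interpret iso: graph_isomorphism "spider_V leaf m" "spider_E leaf m" V E emb
    by (rule embedding_isomorphism)
  have "well_2_placement V E (emb Centre) (iso.transfer (spider_perm leaf m))"
    by (rule iso.well_2_placement_transfer[OF spider_well_2_placement[OF two_legs]])
      (simp add: spider_V_def)
  then show ?thesis by auto
qed

end
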